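(* Let $n\ge 3$, let $d_1,\dots,d_{n-1}>0$, and let the gains satisfy $$k_1\ge k_2,\qquad k_i\ge k_{i+1}+1\ (i=2,\ldots,n-2),\qquad k_{n-1}\ge 1.$$ Writing $s_i(z)=\mathrm{sgn}(z_i)\,\mathrm{sgn}(|z_i|-d_i)$, consider the system on $\mathbb{R}^{n-1}$ $$\dot z_1=-(k_1+1)s_1(z)+k_2 s_2(z),$$ $$\dot z_i=s_{i-1}(z)-(k_i+1)s_i(z)+k_{i+1}s_{i+1}(z),\quad i=2,\ldots,n-2,$$ $$\dot z_{n-1}=s_{n-2}(z)-(k_{n-1}+1)s_{n-1}(z),$$ with right-hand side denoted $f(z)$. Then every Krasowskii solution $z(t)$ of this system converges, as $t\to\infty$, to (a subset of) the set $$\mathcal{E}=\Big\{z\in\mathbb{R}^{n-1}:\sum_{i=1}^{n-1}|z_i|\,\big||z_i|-d_i\big|=0\Big\},$$ i.e. $\mathrm{dist}(z(t),\mathcal{E})\to 0$.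
   Context: The sign function is $\mathrm{sgn}(z)=+1$ if $z\ge 0$ and $\mathrm{sgn}(z)=-1$ if $z<0$. A Krasowskii solution of $\dot z=f(z)$ is an absolutely continuous function $z(t)$ with $\dot z(t)\in\mathcal{K}(f(z(t)))$ for almost every $t$, where $\mathcal{K}(f(z))=\bigcap_{\delta>0}\overline{\mathrm{co}}\,(f(B(z,\delta)))$, $\overline{\mathrm{co}}$ denoting the closed convex hull and $B(z,\delta)$ the open ball of radius $\delta$ about $z$. The system describes the relative positions $z_i=x_i-x_{i+1}$ of $n$ agents on a line moving under $\dot x_1=-k_1\mathrm{sgn}(x_1-x_2)\mathrm{sgn}(|x_1-x_2|-d_1)$, $\dot x_i=\mathrm{sgn}(x_{i-1}-x_i)\mathrm{sgn}(|x_{i-1}-x_i|-d_{i-1})-k_i\mathrm{sgn}(x_i-x_{i+1})\mathrm{sgn}(|x_i-x_{i+1}|-d_i)$ for $2\le i\le n-1$, $\dot x_n=\mathrm{sgn}(x_{n-1}-x_n)\mathrm{sgn}(|x_{n-1}-x_n|-d_{n-1})$. *)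

theory Defs
  imports "HOL-Analysis.Analysis"
begin

definition sgnp :: "real \<Rightarrow> real" where
  "sgnp x = (if x \<ge> 0 then 1 else -1)"

definition sfun :: "(nat \<Rightarrow> real) \<Rightarrow> (nat \<Rightarrow> real) \<Rightarrow> nat \<Rightarrow> real" where
  "sfun d zc i = sgnp (zc i) * sgnp (\<bar>zc i\<bar> - d i)"

definition fcomp :: "nat \<Rightarrow> (nat \<Rightarrow> real) \<Rightarrow> (nat \<Rightarrow> real) \<Rightarrow> (nat \<Rightarrow> real) \<Rightarrow> nat \<Rightarrow> real" where
  "fcomp n k d zc i =
     (if 2 \<le> i then sfun d zc (i - 1) else 0)
     - (k i + 1) * sfun d zc i
     + (if i \<le> n - 2 then k (i + 1) * sfun d zc (i + 1) else 0)"

text \<open>Coordinates of a state vector z in R^(n-1), where the index type 'm is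
  enumerated by e : {1..n-1} -> 'm (so z_i = z $ e i).\<close>
definition coords :: "(nat \<Rightarrow> 'm::finite) \<Rightarrow> real ^ 'm \<Rightarrow> nat \<Rightarrow> real" where
  "coords e z i = z $ e i"

definition vfield :: "nat \<Rightarrow> (nat \<Rightarrow> 'm::finite) \<Rightarrow> (nat \<Rightarrow> real) \<Rightarrow> (nat \<Rightarrow> real)
    \<Rightarrow> real ^ 'm \<Rightarrow> real ^ 'm" where
  "vfield n e k d z = (\<chi> j. fcomp n k d (coords e z) (inv_into {1..n-1} e j))"

definition krasowskii :: "('a::real_normed_vector \<Rightarrow> 'a) \<Rightarrow> 'a \<Rightarrow> 'a set" where
  "krasowskii f z = (\<Inter>\<delta>\<in>{0<..}. closure (convex hull (f ` ball z \<delta>)))"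

definition abs_cont_on :: "real \<Rightarrow> real \<Rightarrow> (real \<Rightarrow> 'a::real_normed_vector) \<Rightarrow> bool" where
  "abs_cont_on a b z \<longleftrightarrow>
     (\<forall>\<epsilon>>0. \<exists>\<delta>>0. \<forall>I :: (real \<times> real) set.
        finite I \<and> (\<forall>(u,v)\<in>I. a \<le> u \<and> u \<le> v \<and> v \<le> b)
        \<and> disjoint_family_on (\<lambda>(u,v). {u<..<v}) I
        \<and> (\<Sum>(u,v)\<in>I. v - u) < \<delta>
        \<longrightarrow> (\<Sum>(u,v)\<in>I. norm (z v - z u)) < \<epsilon>)"

definition krasowskii_solution :: "('a::euclidean_space \<Rightarrow> 'a) \<Rightarrow> (real \<Rightarrow> 'a) \<Rightarrow> bool" where
  "krasowskii_solution f z \<longleftrightarrow>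
     (\<forall>T\<ge>0. abs_cont_on 0 T z) \<and>
     (AE t in lebesgue. 0 < t \<longrightarrow>
        (\<exists>v. (z has_vector_derivative v) (at t) \<and> v \<in> krasowskii f (z t)))"

definition Eset :: "nat \<Rightarrow> (nat \<Rightarrow> 'm::finite) \<Rightarrow> (nat \<Rightarrow> real) \<Rightarrow> (real ^ 'm) set" where
  "Eset n e d = {z. (\<Sum>i=1..n-1. \<bar>coords e z i\<bar> * \<bar>\<bar>coords e z i\<bar> - d i\<bar>) = 0}"

end

theory Submission
  imports Defs
begin

text \<open>The Lyapunov function \<open>V(z) = \<Sum>\<^sub>i \<bar>\<bar>z\<^sub>i\<bar> - d\<^sub>i\<bar>\<close> decreases along Krasowskii
  solutions. At almost every time the velocity is f with the switching signs \<open>s\<^sub>i\<close> replaced by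
  weights \<open>\<tau>\<^sub>i \<in> [-1, 1]\<close> that agree with \<open>s\<^sub>i\<close> off the switching levels, and at such times
  \<open>V' = \<Sum>\<^sub>i \<tau>\<^sub>i f\<^sub>i(\<tau>) \<le> -1/2 \<Sum>\<^sub>i \<tau>\<^sub>i\<^sup>2\<close> by the gain conditions; outside E some
  \<open>\<tau>\<^sub>i = \<pm>1\<close>, so \<open>V' \<le> -1/2\<close>. As solutions are Lipschitz, a solution that is \<open>\<epsilon>\<close>-far from
  E at arbitrarily late times would drive V below zero. The derivative bounds are integrated
  by a gauge argument: an absolutely continuous function whose derivative is at most \<open>\<mu>\<close>
  almost everywhere grows at most at rate \<open>\<mu>\<close>.\<close>

section \<open>Absolutely continuous functions with bounded derivative\<close>


lemma abs_cont_on_subinterval: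
  assumes ac: "abs_cont_on a' b' z" and "a' \<le> a" "b \<le> b'"
  shows "abs_cont_on a b z"
  unfolding abs_cont_on_def
proof (intro allI impI)
  fix \<epsilon> :: real assume "\<epsilon> > 0"
  then obtain \<delta> where "\<delta> > 0" and \<delta>: "\<And>I :: (real \<times> real) set.
        finite I \<Longrightarrow> (\<forall>(u,v)\<in>I. a' \<le> u \<and> u \<le> v \<and> v \<le> b')
        \<Longrightarrow> disjoint_family_on (\<lambda>(u,v). {u<..<v}) I
        \<Longrightarrow> (\<Sum>(u,v)\<in>I. v - u) < \<delta> \<Longrightarrow> (\<Sum>(u,v)\<in>I. norm (z v - z u)) < \<epsilon>"
    using ac unfolding abs_cont_on_def by meson
  show "\<exists>\<delta>>0. \<forall>I :: (real \<times> real) set.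
        finite I \<and> (\<forall>(u,v)\<in>I. a \<le> u \<and> u \<le> v \<and> v \<le> b)
        \<and> disjoint_family_on (\<lambda>(u,v). {u<..<v}) I
        \<and> (\<Sum>(u,v)\<in>I. v - u) < \<delta>
        \<longrightarrow> (\<Sum>(u,v)\<in>I. norm (z v - z u)) < \<epsilon>"
  proof (intro exI[of _ \<delta>] conjI allI impI)
    fix I :: "(real \<times> real) set"
    assume I: "finite I \<and> (\<forall>(u,v)\<in>I. a \<le> u \<and> u \<le> v \<and> v \<le> b)
        \<and> disjoint_family_on (\<lambda>(u,v). {u<..<v}) I \<and> (\<Sum>(u,v)\<in>I. v - u) < \<delta>"
    have "\<forall>(u,v)\<in>I. a' \<le> u \<and> u \<le> v \<and> v \<le> b'"
      using I assms(2,3) by fastforce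
    then show "(\<Sum>(u,v)\<in>I. norm (z v - z u)) < \<epsilon>"
      using I by (intro \<delta>) simp_all
  qed fact
qed

lemma abs_cont_on_lipschitz_comp:
  assumes ac: "abs_cont_on a b z" and lip: "L-lipschitz_on UNIV F"
  shows "abs_cont_on a b (\<lambda>t. F (z t))"
  unfolding abs_cont_on_def
proof (intro allI impI)
  fix \<epsilon> :: real assume "\<epsilon> > 0"
  define L' where "L' = L + 1"
  have L': "L' > 0" using lipschitz_on_nonneg[OF lip] by (simp add: L'_def)
  then have "\<epsilon> / L' > 0" using \<open>\<epsilon> > 0\<close> by simp
  then obtain \<delta> where "\<delta> > 0" and \<delta>: "\<And>I :: (real \<times> real) set.
        finite I \<Longrightarrow> (\<forall>(u,v)\<in>I. a \<le> u \<and> u \<le> v \<and> v \<le> b)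
        \<Longrightarrow> disjoint_family_on (\<lambda>(u,v). {u<..<v}) I
        \<Longrightarrow> (\<Sum>(u,v)\<in>I. v - u) < \<delta> \<Longrightarrow> (\<Sum>(u,v)\<in>I. norm (z v - z u)) < \<epsilon> / L'"
    using ac unfolding abs_cont_on_def by meson
  show "\<exists>\<delta>>0. \<forall>I :: (real \<times> real) set.
        finite I \<and> (\<forall>(u,v)\<in>I. a \<le> u \<and> u \<le> v \<and> v \<le> b)
        \<and> disjoint_family_on (\<lambda>(u,v). {u<..<v}) I
        \<and> (\<Sum>(u,v)\<in>I. v - u) < \<delta>
        \<longrightarrow> (\<Sum>(u,v)\<in>I. norm (F (z v) - F (z u))) < \<epsilon>"
  proof (intro exI[of _ \<delta>] conjI allI impI)
    fix I :: "(real \<times> real) set"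
    assume I: "finite I \<and> (\<forall>(u,v)\<in>I. a \<le> u \<and> u \<le> v \<and> v \<le> b)
        \<and> disjoint_family_on (\<lambda>(u,v). {u<..<v}) I \<and> (\<Sum>(u,v)\<in>I. v - u) < \<delta>"
    have "(\<Sum>(u,v)\<in>I. norm (F (z v) - F (z u))) \<le> (\<Sum>(u,v)\<in>I. L' * norm (z v - z u))"
    proof (intro sum_mono, clarify)
      fix u v
      have "norm (F (z v) - F (z u)) \<le> L * norm (z v - z u)"
        using lipschitz_on_normD[OF lip] by blast
      then show "norm (F (z v) - F (z u)) \<le> L' * norm (z v - z u)"
        unfolding L'_def distrib_right using norm_ge_zero[of "z v - z u"] by linarith
    qed
    also have "\<dots> = L' * (\<Sum>(u,v)\<in>I. norm (z v - z u))"
      by (simp add: sum_distrib_left case_prod_unfold)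
    also have "\<dots> < L' * (\<epsilon> / L')"
      using I L' by (intro mult_strict_left_mono \<delta>) simp_all
    also have "\<dots> = \<epsilon>" using L' by simp
    finally show "(\<Sum>(u,v)\<in>I. norm (F (z v) - F (z u))) < \<epsilon>" .
  qed fact
qed

lemma has_real_derivative_local_secant_le:
  fixes W :: "real \<Rightarrow> real"
  assumes "(W has_real_derivative w) (at t)" "w \<le> \<mu>" "\<epsilon> > 0"
  obtains r where "r > 0"
    "\<And>u v. u \<le> t \<Longrightarrow> t \<le> v \<Longrightarrow> {u..v} \<subseteq> ball t r \<Longrightarrow> W v - W u \<le> (\<mu> + \<epsilon>) * (v - u)"
proof -
  have "((\<lambda>y. (W y - W t) / (y - t)) \<longlongrightarrow> w) (at t)"
    using assms(1) by (simp add: has_field_derivative_iff)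
  then have "\<forall>\<^sub>F y in at t. dist ((W y - W t) / (y - t)) w < \<epsilon>"
    using tendstoD assms(3) by blast
  then obtain r where "r > 0"
    and r: "\<And>y. y \<noteq> t \<Longrightarrow> dist y t < r \<Longrightarrow> dist ((W y - W t) / (y - t)) w < \<epsilon>"
    unfolding eventually_at by blast
  have near: "\<bar>W y - W t - w * (y - t)\<bar> \<le> \<epsilon> * \<bar>y - t\<bar>" if "\<bar>y - t\<bar> < r" for y
  proof (cases "y = t")
    case False
    then have "\<bar>(W y - W t) / (y - t) - w\<bar> < \<epsilon>"
      using r[of y] that by (simp add: dist_real_def)
    moreover have "(W y - W t) / (y - t) - w = (W y - W t - w * (y - t)) / (y - t)"
      using False by (simp add: field_simps)
    ultimately have "\<bar>W y - W t - w * (y - t)\<bar> / \<bar>y - t\<bar> < \<epsilon>"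
      by (simp add: abs_divide)
    then show ?thesis using False by (simp add: field_simps)
  qed simp
  show thesis
  proof (rule that[OF \<open>r > 0\<close>])
    fix u v assume uv: "u \<le> t" "t \<le> v" "{u..v} \<subseteq> ball t r"
    have "u \<in> ball t r" "v \<in> ball t r"
      using subsetD[OF uv(3), of u] subsetD[OF uv(3), of v] uv(1,2) by auto
    then have "\<bar>u - t\<bar> < r" "\<bar>v - t\<bar> < r" by (auto simp: dist_real_def)
    then have "W v - W t - w * (v - t) \<le> \<epsilon> * (v - t)" "W t - W u - w * (t - u) \<le> \<epsilon> * (t - u)"
      using near[of u] near[of v] uv(1,2) by (simp_all add: abs_le_iff algebra_simps)
    moreover have "w * (v - t) \<le> \<mu> * (v - t)" "w * (t - u) \<le> \<mu> * (t - u)"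
      using uv assms(2) by (auto intro: mult_right_mono)
    ultimately show "W v - W u \<le> (\<mu> + \<epsilon>) * (v - u)" by (simp add: algebra_simps)
  qed
qed

lemma negligible_imp_small_open_superset:
  assumes "negligible N" "\<delta> > 0"
  obtains G where "open G" "N \<subseteq> G" "G \<in> lmeasurable" "measure lebesgue G < \<delta>"
proof -
  obtain G where G: "open G" "N \<subseteq> G" "G - N \<in> lmeasurable" "emeasure lebesgue (G - N) < ennreal \<delta>"
    using sets_lebesgue_outer_open[OF negligible_imp_sets[OF assms(1)] assms(2)] by blast
  have N: "N \<in> lmeasurable" "measure lebesgue N = 0"
    using assms(1) by (auto simp: negligible_imp_measurable negligible_imp_measure0)
  have "G = N \<union> (G - N)" using G(2) by blast
  then have "G \<in> lmeasurable" "measure lebesgue G \<le> measure lebesgue N + measure lebesgue (G - N)"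
    using G(3) N(1) by (metis fmeasurable.Un, metis measure_Un_le fmeasurable_def mem_Collect_eq)
  moreover have "measure lebesgue (G - N) < \<delta>"
    using G(4) emeasure_eq_measure2[OF G(3)] assms(2) by (simp add: ennreal_less_iff)
  ultimately show thesis using that G(1,2) N(2) by simp
qed

lemma division_of_real_interval:
  fixes K :: "real set"
  assumes "K \<in> D" "D division_of S"
  shows "K = {Inf K..Sup K}" "Inf K \<le> Sup K"
proof -
  obtain u v where "K = cbox u v" "K \<noteq> {}" using division_ofD(3,4)[OF assms(2,1)] by blast
  then have "K = {u..v}" "u \<le> v" by auto
  then show "K = {Inf K..Sup K}" "Inf K \<le> Sup K" by simp_all
qed

lemma abs_cont_on_division:
  fixes W :: "real \<Rightarrow> 'a::real_normed_vector"
  assumes ac: "abs_cont_on a b W" and "\<epsilon> > 0"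
  obtains \<delta> where "\<delta> > 0"
    "\<And>D. D division_of \<Union>D \<Longrightarrow> \<Union>D \<subseteq> {a..b} \<Longrightarrow> sum (measure lborel) D < \<delta>
       \<Longrightarrow> (\<Sum>K\<in>D. norm (W (Sup K) - W (Inf K))) < \<epsilon>"
proof -
  obtain \<delta> where "\<delta> > 0" and \<delta>: "\<And>I :: (real \<times> real) set.
        finite I \<Longrightarrow> (\<forall>(u,v)\<in>I. a \<le> u \<and> u \<le> v \<and> v \<le> b)
        \<Longrightarrow> disjoint_family_on (\<lambda>(u,v). {u<..<v}) I
        \<Longrightarrow> (\<Sum>(u,v)\<in>I. v - u) < \<delta> \<Longrightarrow> (\<Sum>(u,v)\<in>I. norm (W v - W u)) < \<epsilon>"
    using ac \<open>\<epsilon> > 0\<close> unfolding abs_cont_on_def by meson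
  show thesis
  proof (rule that[OF \<open>\<delta> > 0\<close>])
    fix D assume D: "D division_of \<Union>D" "\<Union>D \<subseteq> {a..b}" "sum (measure lborel) D < \<delta>"
    define ends where "ends K = (Inf K, Sup K)" for K :: "real set"
    have K: "K = {Inf K..Sup K}" "Inf K \<le> Sup K" if "K \<in> D" for K
      using division_of_real_interval[OF that D(1)] by auto
    have inj: "inj_on ends D"
      by (rule inj_onI) (metis K ends_def prod.inject)
    have "(\<Sum>(u,v)\<in>ends ` D. norm (W v - W u)) < \<epsilon>"
    proof (rule \<delta>)
      show "finite (ends ` D)" using D(1) by auto
      show "\<forall>(u,v)\<in>ends ` D. a \<le> u \<and> u \<le> v \<and> v \<le> b"
        using D(2) K by (fastforce simp: ends_def)
      have "{Inf K<..<Sup K} \<inter> {Inf K'<..<Sup K'} = {}" if "K \<in> D" "K' \<in> D" "K \<noteq> K'" for K K'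
        using division_ofD(5)[OF D(1) that] K[OF that(1)] K[OF that(2)]
        by (metis interior_atLeastAtMost_real)
      then show "disjoint_family_on (\<lambda>(u,v). {u<..<v}) (ends ` D)"
        unfolding disjoint_family_on_def ends_def by fastforce
      have "(\<Sum>(u,v)\<in>ends ` D. v - u) = sum (measure lborel) D"
        unfolding sum.reindex[OF inj]
      proof (rule sum.cong)
        fix K assume "K \<in> D"
        then show "((\<lambda>(u,v). v - u) \<circ> ends) K = measure lborel K"
          using K[of K] by (metis comp_apply content_real ends_def split_conv)
      qed simp
      then show "(\<Sum>(u,v)\<in>ends ` D. v - u) < \<delta>" using D(3) by simp
    qed
    then show "(\<Sum>K\<in>D. norm (W (Sup K) - W (Inf K))) < \<epsilon>"
      unfolding sum.reindex[OF inj] by (simp add: ends_def)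
  qed
qed

lemma sum_tagged_partial_division_eq_sum_snd:
  assumes p: "p tagged_partial_division_of S"
    and degenerate: "\<And>K. K \<in> snd ` p \<Longrightarrow> interior K = {} \<Longrightarrow> f K = 0"
  shows "(\<Sum>(x, K)\<in>p. f K) = sum f (snd ` p)"
proof -
  have "sum f (snd ` p) = sum (f \<circ> snd) p"
  proof (rule sum.reindex_nontrivial)
    show "finite p" using tagged_partial_division_ofD(1)[OF p] .
    fix xK yK assume "xK \<in> p" "yK \<in> p" "xK \<noteq> yK" "snd xK = snd yK"
    then have "interior (snd xK) = {}"
      using tagged_partial_division_ofD(5)[OF p] by (metis inf.idem prod.collapse)
    then show "f (snd xK) = 0" using degenerate \<open>xK \<in> p\<close> by blast
  qed
  then show ?thesis by (simp add: case_prod_unfold comp_def)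
qed

lemma tagged_division_increment_le:
  fixes W :: "real \<Rightarrow> real"
  assumes p: "p tagged_division_of {a..b}" and "a \<le> b" "q \<subseteq> p" "\<epsilon> \<ge> 0"
    and off_q: "\<And>x K. (x, K) \<in> p - q \<Longrightarrow> W (Sup K) - W (Inf K) \<le> (\<mu> + \<epsilon>) * measure lborel K"
    and on_q: "(\<Sum>(x, K)\<in>q. W (Sup K) - W (Inf K)) \<le> \<eta>" "(\<Sum>(x, K)\<in>q. measure lborel K) \<le> l"
  shows "W b - W a \<le> \<mu> * (b - a) + \<epsilon> * (b - a) + \<eta> + \<bar>\<mu>\<bar> * l"
proof -
  let ?dW = "\<lambda>(x::real, K). W (Sup K) - W (Inf K)"
  define Y where "Y = (\<Sum>(x, K)\<in>q. measure lborel K)"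
  define X where "X = (\<Sum>(x, K)\<in>p - q. measure lborel K)"
  have "finite p" using p by (rule tagged_division_of_finite)
  then have split: "sum f p = sum f q + sum f (p - q)" for f :: "real \<times> real set \<Rightarrow> real"
    using sum.subset_diff[OF \<open>q \<subseteq> p\<close>] by (simp add: add.commute)
  have "W b - W a = sum ?dW p"
    using additive_tagged_division_1[OF \<open>a \<le> b\<close> p, of W] by simp
  also have "\<dots> = sum ?dW q + sum ?dW (p - q)" by (rule split)
  also have "sum ?dW (p - q) \<le> (\<mu> + \<epsilon>) * X"
    unfolding X_def sum_distrib_left by (rule sum_mono) (use off_q in auto)
  finally have "W b - W a \<le> \<eta> + \<mu> * X + \<epsilon> * X"
    using on_q(1) by (simp add: algebra_simps)
  moreover have "Y + X = b - a"
    using additive_content_tagged_division[of p a b] p \<open>a \<le> b\<close>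
      split[of "\<lambda>(x, K). measure lborel K"] by (simp add: X_def Y_def)
  moreover have "0 \<le> Y" "0 \<le> X"
    by (simp_all add: X_def Y_def sum_nonneg case_prod_unfold)
  moreover have "- \<mu> * Y \<le> \<bar>\<mu>\<bar> * l"
    using mult_right_mono[OF abs_ge_minus_self \<open>0 \<le> Y\<close>, of \<mu>]
      mult_left_mono[OF on_q(2)[folded Y_def] abs_ge_zero, of \<mu>] by linarith
  moreover have "\<epsilon> * X \<le> \<epsilon> * (b - a)"
    using calculation \<open>\<epsilon> \<ge> 0\<close> by (intro mult_left_mono) linarith+
  moreover have "\<mu> * X = \<mu> * (b - a) - \<mu> * Y"
    using \<open>Y + X = b - a\<close> by (simp add: eq_diff_eq' algebra_simps)
  ultimately show ?thesis by linarith
qed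

lemma division_of_real_interval_degenerate:
  fixes K :: "real set"
  assumes "K \<in> D" "D division_of S" "interior K = {}"
  shows "Inf K = Sup K"
  using division_of_real_interval[OF assms(1,2)] assms(3)
  by (metis greaterThanLessThan_empty_iff interior_atLeastAtMost_real order_antisym)

lemma sum_content_tagged_partial_division:
  fixes q :: "(real \<times> real set) set"
  assumes q: "q tagged_partial_division_of S"
  shows "(\<Sum>(x, K)\<in>q. measure lborel K) = sum (measure lborel) (snd ` q)"
  using division_of_real_interval[OF _ partial_division_of_tagged_division[OF q]]
    division_of_real_interval_degenerate[OF _ partial_division_of_tagged_division[OF q]]
  by (intro sum_tagged_partial_division_eq_sum_snd[OF q]) (metis content_real diff_self)

lemma sum_increment_tagged_partial_division:
  fixes q :: "(real \<times> real set) set" and W :: "real \<Rightarrow> 'a::ab_group_add"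
  assumes q: "q tagged_partial_division_of S"
  shows "(\<Sum>(x, K)\<in>q. W (Sup K) - W (Inf K)) = (\<Sum>K\<in>snd ` q. W (Sup K) - W (Inf K))"
  using division_of_real_interval_degenerate[OF _ partial_division_of_tagged_division[OF q]]
  by (intro sum_tagged_partial_division_eq_sum_snd[OF q]) simp

lemma sum_content_division_le_measure:
  fixes D :: "real set set"
  assumes D: "D division_of \<Union>D" and "\<Union>D \<subseteq> G" "G \<in> lmeasurable"
  shows "sum (measure lborel) D \<le> measure lebesgue G"
proof -
  have "sum (measure lborel) D = sum (measure lebesgue) D"
  proof (rule sum.cong)
    fix K assume "K \<in> D"
    then obtain u v :: real where "K = {u..v}" "u \<le> v"
      using division_of_real_interval[OF _ D] by blast
    then show "measure lborel K = measure lebesgue K" by simp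
  qed simp
  also have "\<dots> = measure lebesgue (\<Union>D)"
    by (rule content_division[OF D])
  also have "\<dots> \<le> measure lebesgue G"
    using lmeasurable_division[OF D] assms(2,3) by (intro measure_mono_fmeasurable) auto
  finally show ?thesis .
qed

lemma secant_gauge_exists:
  fixes W :: "real \<Rightarrow> real"
  assumes "open G" "N \<subseteq> G" "\<epsilon> > 0"
    and deriv: "\<And>t. t \<in> {a..b} - N \<Longrightarrow> \<exists>w. (W has_real_derivative w) (at t) \<and> w \<le> \<mu>"
  obtains r where "\<And>t. r t > 0" "\<And>t. t \<in> N \<Longrightarrow> ball t (r t) \<subseteq> G"
    "\<And>t u v. t \<in> {a..b} - N \<Longrightarrow> u \<le> t \<Longrightarrow> t \<le> v \<Longrightarrow> {u..v} \<subseteq> ball t (r t)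
       \<Longrightarrow> W v - W u \<le> (\<mu> + \<epsilon>) * (v - u)"
proof -
  have "\<exists>r>0. (t \<in> N \<longrightarrow> ball t r \<subseteq> G) \<and> (t \<in> {a..b} - N \<longrightarrow>
          (\<forall>u v. u \<le> t \<longrightarrow> t \<le> v \<longrightarrow> {u..v} \<subseteq> ball t r \<longrightarrow> W v - W u \<le> (\<mu> + \<epsilon>) * (v - u)))" for t
  proof (cases "t \<in> {a..b} - N")
    case True
    then obtain w where "(W has_real_derivative w) (at t)" "w \<le> \<mu>" using deriv by blast
    from has_real_derivative_local_secant_le[OF this \<open>\<epsilon> > 0\<close>] show ?thesis
      using True by (metis DiffD2)
  next
    case False
    show ?thesis
    proof (cases "t \<in> N")
      case True
      then obtain r where "r > 0" "ball t r \<subseteq> G" using assms(1,2) openE by blast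
      then show ?thesis using False by blast
    qed (rule exI[of _ 1], use False in auto)
  qed
  then show thesis using that by metis
qed

text \<open>The tags in N carry intervals inside a small open set G, so their total increment is
  small by absolute continuity; on the other intervals the secant slope is at most
  \<open>\<mu> + \<epsilon>\<close>.\<close>
lemma abs_cont_on_DERIV_le_imp_increment_le:
  fixes W :: "real \<Rightarrow> real"
  assumes "a \<le> b" "negligible N" "abs_cont_on a b W"
    and deriv: "\<And>t. t \<in> {a..b} - N \<Longrightarrow> \<exists>w. (W has_real_derivative w) (at t) \<and> w \<le> \<mu>"
  shows "W b - W a \<le> \<mu> * (b - a)"
proof (rule field_le_epsilon)
  fix \<eta> :: real assume "\<eta> > 0"
  define \<epsilon> where "\<epsilon> = \<eta> / (b - a + 2)"
  have "\<epsilon> > 0" using \<open>\<eta> > 0\<close> \<open>a \<le> b\<close> by (simp add: \<epsilon>_def)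
  obtain \<delta>0 where "\<delta>0 > 0" and ac: "\<And>D. D division_of \<Union>D \<Longrightarrow> \<Union>D \<subseteq> {a..b}
      \<Longrightarrow> sum (measure lborel) D < \<delta>0 \<Longrightarrow> (\<Sum>K\<in>D. norm (W (Sup K) - W (Inf K))) < \<epsilon>"
    using abs_cont_on_division[OF assms(3) \<open>\<epsilon> > 0\<close>] by blast
  define \<delta> where "\<delta> = min \<delta>0 (\<epsilon> / (\<bar>\<mu>\<bar> + 1))"
  have "\<delta> > 0" using \<open>\<delta>0 > 0\<close> \<open>\<epsilon> > 0\<close> by (simp add: \<delta>_def)
  obtain G where G: "open G" "N \<subseteq> G" "G \<in> lmeasurable" "measure lebesgue G < \<delta>"
    using negligible_imp_small_open_superset[OF assms(2) \<open>\<delta> > 0\<close>] by blast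
  obtain r where r: "\<And>t. r t > 0" and r_N: "\<And>t. t \<in> N \<Longrightarrow> ball t (r t) \<subseteq> G"
    and r_W: "\<And>t u v. t \<in> {a..b} - N \<Longrightarrow> u \<le> t \<Longrightarrow> t \<le> v \<Longrightarrow> {u..v} \<subseteq> ball t (r t)
                \<Longrightarrow> W v - W u \<le> (\<mu> + \<epsilon>) * (v - u)"
    using secant_gauge_exists[OF G(1,2) \<open>\<epsilon> > 0\<close> deriv] by blast
  obtain p where p: "p tagged_division_of {a..b}" and fine: "(\<lambda>t. ball t (r t)) fine p"
    using fine_division_exists_real[OF gauge_ball_dependent] r by blast
  have K: "K = {Inf K..Sup K}" "x \<in> K" "K \<subseteq> {a..b}" "K \<subseteq> ball x (r x)" if "(x, K) \<in> p" for x K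
  proof -
    have "K \<in> snd ` p" using that by force
    then show "K = {Inf K..Sup K}"
      using division_of_real_interval(1)[OF _ division_of_tagged_division[OF p]] by blast
    show "x \<in> K" "K \<subseteq> {a..b}" using tagged_division_ofD(2,3)[OF p that] by auto
    show "K \<subseteq> ball x (r x)" using fine that by (auto simp: fine_def)
  qed
  define q where "q = {(x, K) \<in> p. x \<in> N}"
  have "q \<subseteq> p" by (auto simp: q_def)
  have q: "q tagged_partial_division_of {a..b}"
    using p \<open>q \<subseteq> p\<close> tagged_partial_division_subset unfolding tagged_division_of_def by blast
  have D: "snd ` q division_of \<Union>(snd ` q)"
    by (rule partial_division_of_tagged_division[OF q])
  have "\<Union>(snd ` q) \<subseteq> G" "\<Union>(snd ` q) \<subseteq> {a..b}"
    using K r_N by (fastforce simp: q_def)+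
  then have "sum (measure lborel) (snd ` q) < \<delta>"
    using sum_content_division_le_measure[OF D _ G(3)] G(4) by fastforce
  then have len_q: "(\<Sum>(x, K)\<in>q. measure lborel K) \<le> \<delta>"
    unfolding sum_content_tagged_partial_division[OF q] by simp
  have "(\<Sum>(x, K)\<in>q. W (Sup K) - W (Inf K)) \<le> (\<Sum>K\<in>snd ` q. norm (W (Sup K) - W (Inf K)))"
    unfolding sum_increment_tagged_partial_division[OF q] by (rule sum_mono) simp
  also have "\<dots> \<le> \<epsilon>"
    using ac[OF D \<open>\<Union>(snd ` q) \<subseteq> {a..b}\<close>] \<open>sum (measure lborel) (snd ` q) < \<delta>\<close> \<delta>_def by simp
  finally have W_q: "(\<Sum>(x, K)\<in>q. W (Sup K) - W (Inf K)) \<le> \<epsilon>" .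
  have "W b - W a \<le> \<mu> * (b - a) + \<epsilon> * (b - a) + \<epsilon> + \<bar>\<mu>\<bar> * \<delta>"
  proof (rule tagged_division_increment_le[OF p \<open>a \<le> b\<close> \<open>q \<subseteq> p\<close> _ _ W_q len_q])
    show "0 \<le> \<epsilon>" using \<open>\<epsilon> > 0\<close> by simp
    fix x K assume "(x, K) \<in> p - q"
    then have "(x, K) \<in> p" "x \<notin> N" by (auto simp: q_def)
    note K = K[OF \<open>(x, K) \<in> p\<close>]
    have "x \<in> {a..b} - N" using K(2,3) \<open>x \<notin> N\<close> by blast
    have "Inf K \<le> x" "x \<le> Sup K" using K(1,2) by (metis atLeastAtMost_iff)+
    then have "W (Sup K) - W (Inf K) \<le> (\<mu> + \<epsilon>) * (Sup K - Inf K)"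
      using r_W[OF \<open>x \<in> {a..b} - N\<close>] K(1,4) by metis
    then show "W (Sup K) - W (Inf K) \<le> (\<mu> + \<epsilon>) * measure lborel K"
      using K(1) \<open>Inf K \<le> x\<close> \<open>x \<le> Sup K\<close> by (metis content_real order_trans)
  qed
  moreover have "\<bar>\<mu>\<bar> * \<delta> \<le> (\<bar>\<mu>\<bar> + 1) * (\<epsilon> / (\<bar>\<mu>\<bar> + 1))"
    using \<open>\<delta> > 0\<close> by (intro mult_mono) (auto simp: \<delta>_def)
  moreover have "(\<bar>\<mu>\<bar> + 1) * (\<epsilon> / (\<bar>\<mu>\<bar> + 1)) = \<epsilon>" by simp
  moreover have "\<epsilon> * (b - a + 2) = \<eta>"
    using \<open>a \<le> b\<close> by (simp add: \<epsilon>_def)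
  ultimately show "W b - W a \<le> \<mu> * (b - a) + \<eta>"
    using distrib_left[of \<epsilon> "b - a" 2] by linarith
qed

lemma abs_cont_on_DERIV_abs_le_imp_increment_le:
  fixes W :: "real \<Rightarrow> real"
  assumes "a \<le> b" "negligible N" "abs_cont_on a b W"
    and deriv: "\<And>t. t \<in> {a..b} - N \<Longrightarrow> \<exists>w. (W has_real_derivative w) (at t) \<and> \<bar>w\<bar> \<le> L"
  shows "\<bar>W b - W a\<bar> \<le> L * (b - a)"
proof -
  have "W b - W a \<le> L * (b - a)"
    using abs_cont_on_DERIV_le_imp_increment_le[OF assms(1-3)] deriv abs_le_D1 by blast
  moreover have "(\<lambda>t. - W t) b - (\<lambda>t. - W t) a \<le> L * (b - a)"
  proof (rule abs_cont_on_DERIV_le_imp_increment_le[OF assms(1,2)])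
    show "abs_cont_on a b (\<lambda>t. - W t)"
      using abs_cont_on_lipschitz_comp[OF assms(3), of 1 uminus] by (simp add: lipschitz_onI dist_real_def)
    fix t assume "t \<in> {a..b} - N"
    then obtain w where "(W has_real_derivative w) (at t)" "\<bar>w\<bar> \<le> L" using deriv by blast
    then show "\<exists>w. ((\<lambda>t. - W t) has_real_derivative w) (at t) \<and> w \<le> L"
      using DERIV_minus abs_le_D2 by blast
  qed
  ultimately show ?thesis by simp
qed

section \<open>Level crossings and the distance to the switching levels\<close>

lemma countable_if_isolated_real:
  fixes S :: "real set"
  assumes isolated: "\<And>t. t \<in> S \<Longrightarrow> \<exists>r>0. \<forall>s\<in>S. \<bar>s - t\<bar> < r \<longrightarrow> s = t"
  shows "countable S"
proof -
  obtain r where r: "\<And>t. t \<in> S \<Longrightarrow> r t > 0 \<and> (\<forall>s\<in>S. \<bar>s - t\<bar> < r t \<longrightarrow> s = t)"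
    using isolated by metis
  have "\<exists>q. q \<in> \<rat> \<and> t - r t / 2 < q \<and> q < t" if "t \<in> S" for t
    using r[OF that] Rats_dense_in_real[of "t - r t / 2" t] by auto
  then obtain q where q: "\<And>t. t \<in> S \<Longrightarrow> q t \<in> \<rat> \<and> t - r t / 2 < q t \<and> q t < t"
    by metis
  have "inj_on q S"
  proof (rule inj_onI)
    fix x y assume xy: "x \<in> S" "y \<in> S" "q x = q y"
    have "\<bar>y - x\<bar> < r x \<or> \<bar>x - y\<bar> < r y"
      using q[OF xy(1)] q[OF xy(2)] xy(3) r[OF xy(1)] r[OF xy(2)] by (auto simp: abs_if)
    then show "x = y" using r xy by force
  qed
  moreover have "countable (q ` S)"
    by (rule countable_subset[OF _ countable_rat]) (use q in auto)
  ultimately show ?thesis using countable_image_inj_on by blast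
qed

lemma countable_level_set_nonzero_derivative:
  fixes g :: "real \<Rightarrow> real"
  shows "countable {t. g t = c \<and> (\<exists>D. D \<noteq> 0 \<and> (g has_real_derivative D) (at t))}"
    (is "countable ?S")
proof (rule countable_if_isolated_real)
  fix t assume "t \<in> ?S"
  then obtain D where t: "g t = c" "D \<noteq> 0" "(g has_real_derivative D) (at t)" by blast
  have "((\<lambda>y. (g y - g t) / (y - t)) \<longlongrightarrow> D) (at t)"
    using t(3) by (simp add: has_field_derivative_iff)
  then have "\<forall>\<^sub>F y in at t. dist ((g y - g t) / (y - t)) D < \<bar>D\<bar>"
    using tendstoD t(2) by force
  then obtain r where "r > 0"
    and r: "\<And>y. y \<noteq> t \<Longrightarrow> dist y t < r \<Longrightarrow> dist ((g y - g t) / (y - t)) D < \<bar>D\<bar>"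
    unfolding eventually_at by blast
  have "s = t" if "s \<in> ?S" "\<bar>s - t\<bar> < r" for s
  proof (rule ccontr)
    assume "s \<noteq> t"
    then have "dist ((g s - g t) / (s - t)) D < \<bar>D\<bar>" using r that(2) by (simp add: dist_real_def)
    moreover have "g s = g t" using that(1) t(1) by simp
    ultimately show False by (simp add: dist_real_def)
  qed
  then show "\<exists>r>0. \<forall>s\<in>?S. \<bar>s - t\<bar> < r \<longrightarrow> s = t" using \<open>r > 0\<close> by blast
qed

lemma has_real_derivative_abs:
  fixes x :: real
  assumes "x \<noteq> 0"
  shows "(abs has_real_derivative sgn x) (at x)"
proof (cases "x > 0")
  case True
  have "((\<lambda>y. y) has_real_derivative 1) (at x)" by (rule DERIV_ident)
  then have "(abs has_real_derivative 1) (at x)"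
    by (rule has_field_derivative_transform_within_open[where S="{0<..}"]) (use True in auto)
  then show ?thesis using True by simp
next
  case False
  with assms have "x < 0" by simp
  have "((\<lambda>y. - y) has_real_derivative -1) (at x)" by (auto intro!: derivative_eq_intros)
  then have "(abs has_real_derivative -1) (at x)"
    by (rule has_field_derivative_transform_within_open[where S="{..<0}"]) (use \<open>x < 0\<close> in auto)
  then show ?thesis using \<open>x < 0\<close> by simp
qed

lemma has_real_derivative_zero_if_dominated:
  fixes g h :: "real \<Rightarrow> real"
  assumes "(h has_real_derivative 0) (at t)" and "\<And>s. \<bar>g s - g t\<bar> \<le> \<bar>h s - h t\<bar>"
  shows "(g has_real_derivative 0) (at t)"
proof -
  have "((\<lambda>y. (h y - h t) / (y - t)) \<longlongrightarrow> 0) (at t)"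
    using assms(1) by (simp add: has_field_derivative_iff)
  then have "((\<lambda>y. \<bar>(h y - h t) / (y - t)\<bar>) \<longlongrightarrow> 0) (at t)" by (rule tendsto_rabs_zero)
  moreover have "\<forall>\<^sub>F y in at t. norm ((g y - g t) / (y - t)) \<le> \<bar>(h y - h t) / (y - t)\<bar>"
    using assms(2) by (auto simp: abs_divide divide_right_mono)
  ultimately have "((\<lambda>y. (g y - g t) / (y - t)) \<longlongrightarrow> 0) (at t)"
    using Lim_null_comparison by metis
  then show ?thesis by (simp add: has_field_derivative_iff)
qed

lemma abs_abs_minus_diff_le: "\<bar>\<bar>\<bar>y\<bar> - D\<bar> - \<bar>\<bar>x\<bar> - D\<bar>\<bar> \<le> \<bar>y - (x::real)\<bar>"
  using abs_triangle_ineq3[of "\<bar>y\<bar> - D" "\<bar>x\<bar> - D"] abs_triangle_ineq3[of y x] by simp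

lemma sgnp_eq_sgn: "x \<noteq> 0 \<Longrightarrow> sgnp x = sgn x"
  by (simp add: sgnp_def sgn_real_def)

lemma has_real_derivative_abs_abs_minus_comp:
  fixes g :: "real \<Rightarrow> real"
  assumes g: "(g has_real_derivative w) (at t)" and "D > 0"
    and switching: "g t \<in> {0, D, - D} \<Longrightarrow> w = 0"
  shows "((\<lambda>s. \<bar>\<bar>g s\<bar> - D\<bar>) has_real_derivative sgnp (g t) * sgnp (\<bar>g t\<bar> - D) * w) (at t)"
proof (cases "g t \<in> {0, D, - D}")
  case False
  then have "g t \<noteq> 0" "\<bar>g t\<bar> - D \<noteq> 0" by (auto simp: abs_if split: if_splits)
  have "((\<lambda>y. \<bar>y\<bar> - D) has_real_derivative sgn (g t)) (at (g t))"
    using DERIV_diff[OF has_real_derivative_abs[OF \<open>g t \<noteq> 0\<close>] DERIV_const[of D]] by simp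
  from DERIV_chain2[OF has_real_derivative_abs[OF \<open>\<bar>g t\<bar> - D \<noteq> 0\<close>] this]
  have "((\<lambda>y. \<bar>\<bar>y\<bar> - D\<bar>) has_real_derivative sgnp (g t) * sgnp (\<bar>g t\<bar> - D)) (at (g t))"
    using \<open>g t \<noteq> 0\<close> \<open>\<bar>g t\<bar> - D \<noteq> 0\<close> by (simp add: sgnp_eq_sgn mult.commute)
  from DERIV_chain2[OF this g] show ?thesis .
next
  case True
  then have "(g has_real_derivative 0) (at t)" using g switching by simp
  then have "((\<lambda>s. \<bar>\<bar>g s\<bar> - D\<bar>) has_real_derivative 0) (at t)"
    by (rule has_real_derivative_zero_if_dominated) (rule abs_abs_minus_diff_le)
  then show ?thesis using True switching by simp
qed

section \<open>The linearised vector field and its quadratic form\<close>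

definition chain_field :: "nat \<Rightarrow> (nat \<Rightarrow> real) \<Rightarrow> (nat \<Rightarrow> real) \<Rightarrow> nat \<Rightarrow> real" where
  "chain_field n k \<sigma> i =
     (if 2 \<le> i then \<sigma> (i - 1) else 0) - (k i + 1) * \<sigma> i
     + (if i \<le> n - 2 then k (i + 1) * \<sigma> (i + 1) else 0)"

lemma fcomp_eq_chain_field: "fcomp n k d zc i = chain_field n k (sfun d zc) i"
  by (simp add: fcomp_def chain_field_def)

lemma chain_field_cong:
  assumes "i \<in> {1..n-1}" "\<And>l. l \<in> {1..n-1} \<Longrightarrow> \<sigma> l = \<sigma>' l"
  shows "chain_field n k \<sigma> i = chain_field n k \<sigma>' i"
proof -
  have "2 \<le> i \<Longrightarrow> i - 1 \<in> {1..n-1}" "i \<le> n - 2 \<Longrightarrow> i + 1 \<in> {1..n-1}"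
    using assms(1) by auto
  then have "2 \<le> i \<Longrightarrow> \<sigma> (i - 1) = \<sigma>' (i - 1)" "i \<le> n - 2 \<Longrightarrow> \<sigma> (i + 1) = \<sigma>' (i + 1)" "\<sigma> i = \<sigma>' i"
    using assms by auto
  then show ?thesis by (simp add: chain_field_def)
qed

lemma abs_chain_field_le:
  assumes "i \<in> {1..n-1}" "\<And>l. l \<in> {1..n-1} \<Longrightarrow> \<bar>\<sigma> l\<bar> \<le> 1"
  shows "\<bar>chain_field n k \<sigma> i\<bar> \<le> 2 + \<bar>k i\<bar> + \<bar>k (i + 1)\<bar>"
proof -
  have "2 \<le> i \<Longrightarrow> i - 1 \<in> {1..n-1}" "i \<le> n - 2 \<Longrightarrow> i + 1 \<in> {1..n-1}"
    using assms(1) by auto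
  then have "\<bar>if 2 \<le> i then \<sigma> (i - 1) else 0\<bar> \<le> 1"
    using assms(2) by auto
  moreover have "\<bar>(k i + 1) * \<sigma> i\<bar> \<le> \<bar>k i\<bar> + 1"
    using mult_mono[OF abs_triangle_ineq[of "k i" 1] assms(2)[OF assms(1)]] by (simp add: abs_mult)
  moreover have "\<bar>if i \<le> n - 2 then k (i + 1) * \<sigma> (i + 1) else 0\<bar> \<le> \<bar>k (i + 1)\<bar>"
    using \<open>i \<le> n - 2 \<Longrightarrow> i + 1 \<in> {1..n-1}\<close> assms(2)
      mult_left_mono[of "\<bar>\<sigma> (i + 1)\<bar>" 1 "\<bar>k (i + 1)\<bar>"] by (auto simp: abs_mult)
  ultimately show ?thesis unfolding chain_field_def by linarith
qed

lemma sum_shift_chain_index: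
  fixes h :: "nat \<Rightarrow> real"
  shows "(\<Sum>i=1..n-1. if 2 \<le> i then h i else 0) = (\<Sum>i=1..n-1. if i \<le> n - 2 then h (i + 1) else 0)"
proof (cases "n \<ge> 2")
  case True
  have "(\<Sum>i=1..n-1. if 2 \<le> i then h i else 0) = sum h {i \<in> {1..n-1}. 2 \<le> i}"
    by (rule sum.inter_filter[symmetric]) simp
  also have "{i \<in> {1..n-1}. 2 \<le> i} = {1+1..(n-2)+1}" using True by auto
  also have "sum h {1+1..(n-2)+1} = (\<Sum>i=1..n-2. h (i + 1))" by (rule sum.shift_bounds_cl_nat_ivl)
  also have "{1..n-2} = {i \<in> {1..n-1}. i \<le> n - 2}" using True by auto
  also have "(\<Sum>i\<in>{i \<in> {1..n-1}. i \<le> n - 2}. h (i + 1)) = (\<Sum>i=1..n-1. if i \<le> n - 2 then h (i + 1) else 0)"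
    by (rule sum.inter_filter) simp
  finally show ?thesis .
qed simp

lemma sum_mult_chain_field_eq:
  "(\<Sum>i=1..n-1. \<tau> i * chain_field n k \<tau> i)
     = (\<Sum>i=1..n-1. - (k i + 1) * (\<tau> i)\<^sup>2 + (if i \<le> n - 2 then (k (i + 1) + 1) * (\<tau> i * \<tau> (i + 1)) else 0))"
proof -
  let ?A = "{1..n-1}"
  have "(\<Sum>i\<in>?A. \<tau> i * chain_field n k \<tau> i) = (\<Sum>i\<in>?A. if 2 \<le> i then \<tau> i * \<tau> (i - 1) else 0)
      + (\<Sum>i\<in>?A. - (k i + 1) * (\<tau> i)\<^sup>2 + (if i \<le> n - 2 then k (i + 1) * (\<tau> i * \<tau> (i + 1)) else 0))"
    unfolding sum.distrib[symmetric]
    by (rule sum.cong) (auto simp: chain_field_def algebra_simps power2_eq_square)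
  also have "(\<Sum>i\<in>?A. if 2 \<le> i then \<tau> i * \<tau> (i - 1) else 0)
      = (\<Sum>i\<in>?A. if i \<le> n - 2 then \<tau> (i + 1) * \<tau> (i + 1 - 1) else 0)"
    by (rule sum_shift_chain_index)
  also have "\<dots> = (\<Sum>i\<in>?A. if i \<le> n - 2 then \<tau> i * \<tau> (i + 1) else 0)"
    by (rule sum.cong) auto
  also have "(\<Sum>i\<in>?A. if i \<le> n - 2 then \<tau> i * \<tau> (i + 1) else 0)
      + (\<Sum>i\<in>?A. - (k i + 1) * (\<tau> i)\<^sup>2 + (if i \<le> n - 2 then k (i + 1) * (\<tau> i * \<tau> (i + 1)) else 0))
      = (\<Sum>i\<in>?A. - (k i + 1) * (\<tau> i)\<^sup>2
      + (if i \<le> n - 2 then (k (i + 1) + 1) * (\<tau> i * \<tau> (i + 1)) else 0))"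
    unfolding sum.distrib[symmetric] by (rule sum.cong) (auto simp: algebra_simps)
  finally show ?thesis .
qed

lemma gains_ge_one:
  fixes k :: "nat \<Rightarrow> real"
  assumes kmid: "\<forall>i\<in>{2..n-2}. k i \<ge> k (i + 1) + 1" and klast: "k (n - 1) \<ge> 1"
    and "i \<in> {2..n-1}"
  shows "k i \<ge> 1"
proof -
  have "k (n - 1 - j) \<ge> 1" if "n - 1 - j \<ge> 2" for j
    using that
  proof (induction j)
    case (Suc j)
    then have "n - 1 - Suc j \<in> {2..n-2}" "n - 1 - Suc j + 1 = n - 1 - j" by auto
    then show ?case using Suc kmid by fastforce
  qed (use klast in simp)
  from this[of "n - 1 - i"] show ?thesis using assms(3) by auto
qed

lemma chain_diagonal_coefficient_le:
  fixes k :: "nat \<Rightarrow> real"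
  assumes "n \<ge> 3" and k1: "k 1 \<ge> k 2" and kmid: "\<forall>i\<in>{2..n-2}. k i \<ge> k (i + 1) + 1"
    and klast: "k (n - 1) \<ge> 1" and i: "i \<in> {1..n-1}"
  shows "- (k i + 1) + (if i \<le> n - 2 then (k (i + 1) + 1) / 2 else 0) + (if 2 \<le> i then (k i + 1) / 2 else 0)
           \<le> - 1 / 2" (is "?c \<le> _")
proof -
  consider "i = 1" | "2 \<le> i" "i \<le> n - 2" | "i = n - 1" using i by fastforce
  then show ?thesis
  proof cases
    case 1
    have "k 2 \<ge> 1" using gains_ge_one[OF kmid klast, of 2] \<open>n \<ge> 3\<close> by simp
    have "1 \<le> n - 2" using \<open>n \<ge> 3\<close> by linarith
    then have "?c = - (k 1 + 1) + (k 2 + 1) / 2" using 1 by (simp add: numeral_2_eq_2)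
    then show ?thesis using k1 \<open>k 2 \<ge> 1\<close> by (simp add: field_simps)
  next
    case 2
    then have "k i \<ge> k (i + 1) + 1" using kmid by auto
    then show ?thesis using 2 by (simp add: field_simps)
  next
    case 3
    then show ?thesis using gains_ge_one[OF kmid klast, of i] \<open>n \<ge> 3\<close> by (auto simp: field_simps)
  qed
qed

lemma sum_mult_chain_field_le:
  fixes k \<tau> :: "nat \<Rightarrow> real"
  assumes "n \<ge> 3" and k1: "k 1 \<ge> k 2" and kmid: "\<forall>i\<in>{2..n-2}. k i \<ge> k (i + 1) + 1"
    and klast: "k (n - 1) \<ge> 1"
  shows "(\<Sum>i=1..n-1. \<tau> i * chain_field n k \<tau> i) \<le> - (1 / 2) * (\<Sum>i=1..n-1. (\<tau> i)\<^sup>2)"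
proof -
  let ?A = "{1..n-1}"
  let ?c = "\<lambda>i. - (k i + 1) + (if i \<le> n - 2 then (k (i + 1) + 1) / 2 else 0)
                 + (if 2 \<le> i then (k i + 1) / 2 else 0)"
  have "(\<Sum>i\<in>?A. \<tau> i * chain_field n k \<tau> i)
      \<le> (\<Sum>i\<in>?A. - (k i + 1) * (\<tau> i)\<^sup>2 + (if i \<le> n - 2 then (k (i + 1) + 1) / 2 * (\<tau> i)\<^sup>2 else 0)
        + (if i \<le> n - 2 then (k (i + 1) + 1) / 2 * (\<tau> (i + 1))\<^sup>2 else 0))"
    unfolding sum_mult_chain_field_eq
  proof (rule sum_mono)
    fix i assume "i \<in> ?A"
    show "- (k i + 1) * (\<tau> i)\<^sup>2 + (if i \<le> n - 2 then (k (i + 1) + 1) * (\<tau> i * \<tau> (i + 1)) else 0)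
        \<le> - (k i + 1) * (\<tau> i)\<^sup>2 + (if i \<le> n - 2 then (k (i + 1) + 1) / 2 * (\<tau> i)\<^sup>2 else 0)
          + (if i \<le> n - 2 then (k (i + 1) + 1) / 2 * (\<tau> (i + 1))\<^sup>2 else 0)"
    proof (cases "i \<le> n - 2")
      case True
      then have "i + 1 \<in> {2..n-1}" using \<open>i \<in> ?A\<close> by auto
      then have "k (i + 1) + 1 \<ge> 0" using gains_ge_one[OF kmid klast] by fastforce
      have "2 * (\<tau> i * \<tau> (i + 1)) \<le> (\<tau> i)\<^sup>2 + (\<tau> (i + 1))\<^sup>2"
        using sum_squares_bound[of "\<tau> i" "\<tau> (i + 1)"] by (simp add: algebra_simps)
      then have "(k (i + 1) + 1) * (2 * (\<tau> i * \<tau> (i + 1)))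
          \<le> (k (i + 1) + 1) * ((\<tau> i)\<^sup>2 + (\<tau> (i + 1))\<^sup>2)"
        using \<open>k (i + 1) + 1 \<ge> 0\<close> by (rule mult_left_mono)
      then show ?thesis using True by (simp add: field_simps)
    qed simp
  qed
  also have "\<dots> = (\<Sum>i\<in>?A. - (k i + 1) * (\<tau> i)\<^sup>2 + (if i \<le> n - 2 then (k (i + 1) + 1) / 2 * (\<tau> i)\<^sup>2 else 0))
        + (\<Sum>i\<in>?A. if i \<le> n - 2 then (k (i + 1) + 1) / 2 * (\<tau> (i + 1))\<^sup>2 else 0)"
    by (simp add: sum.distrib)
  also have "(\<Sum>i\<in>?A. if i \<le> n - 2 then (k (i + 1) + 1) / 2 * (\<tau> (i + 1))\<^sup>2 else 0)
      = (\<Sum>i\<in>?A. if 2 \<le> i then (k i + 1) / 2 * (\<tau> i)\<^sup>2 else 0)"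
    by (rule sum_shift_chain_index[symmetric])
  also have "(\<Sum>i\<in>?A. - (k i + 1) * (\<tau> i)\<^sup>2 + (if i \<le> n - 2 then (k (i + 1) + 1) / 2 * (\<tau> i)\<^sup>2 else 0))
        + (\<Sum>i\<in>?A. if 2 \<le> i then (k i + 1) / 2 * (\<tau> i)\<^sup>2 else 0)
      = (\<Sum>i\<in>?A. ?c i * (\<tau> i)\<^sup>2)"
    unfolding sum.distrib[symmetric] by (rule sum.cong) (auto simp: algebra_simps)
  also have "\<dots> \<le> (\<Sum>i\<in>?A. - (1 / 2) * (\<tau> i)\<^sup>2)"
    using chain_diagonal_coefficient_le[OF assms]
    by (intro sum_mono mult_right_mono) auto
  finally show ?thesis by (simp add: sum_distrib_left)
qed

section \<open>Krasowskii velocities\<close>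

lemma krasowskii_subset:
  assumes "\<delta> > 0" "f ` ball z \<delta> \<subseteq> B" "convex B" "closed B"
  shows "krasowskii f z \<subseteq> B"
proof -
  have "closure (convex hull (f ` ball z \<delta>)) \<subseteq> B"
    by (rule closure_minimal[OF hull_minimal[where S = convex, OF assms(2,3)] assms(4)])
  then show ?thesis using assms(1) unfolding krasowskii_def by blast
qed

lemma sfun_cases: "sfun d zc i = 1 \<or> sfun d zc i = -1"
  by (simp add: sfun_def sgnp_def)

lemma sgnp_switch_locally_constant:
  fixes x y D :: real
  assumes "x \<noteq> 0" "\<bar>x\<bar> \<noteq> D" "\<bar>y - x\<bar> < \<bar>x\<bar>" "\<bar>y - x\<bar> < \<bar>\<bar>x\<bar> - D\<bar>"
  shows "sgnp y * sgnp (\<bar>y\<bar> - D) = sgnp x * sgnp (\<bar>x\<bar> - D)"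
proof -
  have "sgnp y = sgnp x" using assms(1,3) by (auto simp: sgnp_def abs_if split: if_splits)
  moreover have "sgnp (\<bar>y\<bar> - D) = sgnp (\<bar>x\<bar> - D)"
    using abs_triangle_ineq3[of y x] assms(2,4) by (auto simp: sgnp_def abs_if split: if_splits)
  ultimately show ?thesis by simp
qed

lemma sfun_locally_constant:
  fixes x :: "real ^ 'm::finite" and e :: "nat \<Rightarrow> 'm"
  assumes "finite A"
  obtains \<delta> where "\<delta> > 0"
    "\<And>y i. y \<in> ball x \<delta> \<Longrightarrow> i \<in> A \<Longrightarrow> coords e x i \<noteq> 0 \<Longrightarrow> \<bar>coords e x i\<bar> \<noteq> d i
       \<Longrightarrow> sfun d (coords e y) i = sfun d (coords e x) i"
proof -
  define m where "m i = min \<bar>coords e x i\<bar> \<bar>\<bar>coords e x i\<bar> - d i\<bar>" for i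
  define \<delta> where "\<delta> = Min (insert 1 (m ` {i \<in> A. coords e x i \<noteq> 0 \<and> \<bar>coords e x i\<bar> \<noteq> d i}))"
  show thesis
  proof (rule that)
    show "\<delta> > 0" using assms by (auto simp: \<delta>_def m_def)
    fix y i assume y: "y \<in> ball x \<delta>" and i: "i \<in> A" "coords e x i \<noteq> 0" "\<bar>coords e x i\<bar> \<noteq> d i"
    have "\<bar>coords e y i - coords e x i\<bar> \<le> norm (y - x)"
      using component_le_norm_cart[of "y - x" "e i"] by (simp add: coords_def)
    also have "\<dots> < \<delta>" using y by (simp add: dist_norm norm_minus_commute)
    also have "\<delta> \<le> m i" using assms i by (simp add: \<delta>_def)
    finally show "sfun d (coords e y) i = sfun d (coords e x) i"
      using i unfolding sfun_def m_def by (intro sgnp_switch_locally_constant) auto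
  qed
qed

text \<open>Near x the coordinates off the switching levels keep their sign products while the
  others range in [-1, 1], so f maps a small ball into the image of a box under the linear map
  chain_field; this compact convex set then contains the Krasowskii set.\<close>
lemma krasowskii_vfield_weights:
  fixes e :: "nat \<Rightarrow> 'm::finite" and x v :: "real ^ 'm"
  assumes enum: "bij_betw e {1..n-1} UNIV" and v: "v \<in> krasowskii (vfield n e k d) x"
  obtains \<tau> where "\<And>i. i \<in> {1..n-1} \<Longrightarrow> \<bar>\<tau> i\<bar> \<le> 1"
    "\<And>i. i \<in> {1..n-1} \<Longrightarrow> coords e x i \<noteq> 0 \<Longrightarrow> \<bar>coords e x i\<bar> \<noteq> d i \<Longrightarrow> \<tau> i = sfun d (coords e x) i"
    "\<And>i. i \<in> {1..n-1} \<Longrightarrow> v $ e i = chain_field n k \<tau> i"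
proof -
  let ?A = "{1..n-1}"
  define ie where "ie = inv_into ?A e"
  have ie: "ie (e i) = i" if "i \<in> ?A" for i
    using enum that unfolding ie_def bij_betw_def by (simp add: inv_into_f_f)
  have onto: "j \<in> e ` ?A" for j using enum unfolding bij_betw_def by auto
  have ie_in: "ie j \<in> ?A" for j unfolding ie_def using onto by (rule inv_into_into)
  define zc where "zc = coords e x"
  define off where "off i \<longleftrightarrow> zc i \<noteq> 0 \<and> \<bar>zc i\<bar> \<noteq> d i" for i
  obtain \<delta> where "\<delta> > 0" and \<delta>: "\<And>y i. y \<in> ball x \<delta> \<Longrightarrow> i \<in> ?A \<Longrightarrow> coords e x i \<noteq> 0
      \<Longrightarrow> \<bar>coords e x i\<bar> \<noteq> d i \<Longrightarrow> sfun d (coords e y) i = sfun d (coords e x) i"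
    using sfun_locally_constant[OF finite_atLeastAtMost] by blast
  define lo :: "real ^ 'm" where "lo = (\<chi> j. if off (ie j) then sfun d zc (ie j) else -1)"
  define hi :: "real ^ 'm" where "hi = (\<chi> j. if off (ie j) then sfun d zc (ie j) else 1)"
  define F :: "real ^ 'm \<Rightarrow> real ^ 'm" where "F w = (\<chi> j. chain_field n k (\<lambda>i. w $ e i) (ie j))" for w
  have "linear F"
    by (rule linearI) (auto simp: F_def vec_eq_iff chain_field_def algebra_simps)
  have ball_subset: "vfield n e k d ` ball x \<delta> \<subseteq> F ` cbox lo hi"
  proof clarify
    fix y assume "y \<in> ball x \<delta>"
    define w :: "real ^ 'm" where "w = (\<chi> j. sfun d (coords e y) (ie j))"
    have "lo $ j \<le> w $ j \<and> w $ j \<le> hi $ j" for j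
    proof (cases "off (ie j)")
      case True
      then show ?thesis
        using \<delta>[OF \<open>y \<in> ball x \<delta>\<close> ie_in] by (simp add: lo_def hi_def w_def off_def zc_def)
    next
      case False
      then show ?thesis using sfun_cases[of d "coords e y" "ie j"] by (auto simp: lo_def hi_def w_def)
    qed
    then have "w \<in> cbox lo hi" by (simp add: mem_box_cart)
    moreover have "vfield n e k d y = F w"
    proof -
      have "chain_field n k (sfun d (coords e y)) (ie j) = chain_field n k (\<lambda>i. w $ e i) (ie j)" for j
        by (rule chain_field_cong[OF ie_in]) (simp add: w_def ie)
      then show ?thesis unfolding vfield_def F_def fcomp_eq_chain_field ie_def[symmetric] by simp
    qed
    ultimately show "vfield n e k d y \<in> F ` cbox lo hi" by blast
  qed
  have "convex (F ` cbox lo hi)" by (rule convex_linear_image[OF \<open>linear F\<close>]) simp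
  moreover have "compact (F ` cbox lo hi)"
    using \<open>linear F\<close> by (intro compact_continuous_image linear_continuous_on) (auto simp: linear_conv_bounded_linear)
  ultimately have "v \<in> F ` cbox lo hi"
    using krasowskii_subset[OF \<open>\<delta> > 0\<close> ball_subset] v compact_imp_closed by blast
  then obtain w where w: "w \<in> cbox lo hi" "v = F w" by blast
  show thesis
  proof (rule that[of "\<lambda>i. w $ e i"])
    fix i assume i: "i \<in> ?A"
    have b: "lo $ e i \<le> w $ e i" "w $ e i \<le> hi $ e i" using w(1) unfolding mem_box_cart by auto
    then show "\<bar>w $ e i\<bar> \<le> 1"
      using sfun_cases[of d zc i] ie[OF i] by (auto simp: lo_def hi_def split: if_splits)
    show "v $ e i = chain_field n k (\<lambda>i. w $ e i) i" using w(2) ie[OF i] by (simp add: F_def)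
    assume "coords e x i \<noteq> 0" "\<bar>coords e x i\<bar> \<noteq> d i"
    then have "lo $ e i = sfun d zc i" "hi $ e i = sfun d zc i"
      using ie[OF i] by (simp_all add: lo_def hi_def off_def zc_def)
    then show "w $ e i = sfun d (coords e x) i" using b by (simp add: zc_def)
  qed
qed

lemma infdist_tendsto_0_if_lyapunov:
  fixes y :: "real \<Rightarrow> 'a::metric_space" and W :: "real \<Rightarrow> real"
  assumes lip: "\<And>a b. 0 \<le> a \<Longrightarrow> a \<le> b \<Longrightarrow> dist (y a) (y b) \<le> K * (b - a)"
    and W_nonneg: "\<And>t. 0 \<le> t \<Longrightarrow> 0 \<le> W t"
    and W_antimono: "\<And>a b. 0 \<le> a \<Longrightarrow> a \<le> b \<Longrightarrow> W b \<le> W a"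
    and W_decrease: "\<And>a b. 0 \<le> a \<Longrightarrow> a \<le> b \<Longrightarrow> (\<And>s. s \<in> {a..b} \<Longrightarrow> y s \<notin> E)
                       \<Longrightarrow> W b \<le> W a - c * (b - a)"
    and "c > 0"
  shows "((\<lambda>t. infdist (y t) E) \<longlongrightarrow> 0) at_top"
proof (rule tendstoI)
  fix \<epsilon> :: real assume "\<epsilon> > 0"
  have "K \<ge> 0" using lip[of 0 1] zero_le_dist[of "y 0" "y 1"] by (simp del: zero_le_dist)
  define h where "h = \<epsilon> / (2 * (K + 1))"
  have "h > 0" using \<open>\<epsilon> > 0\<close> \<open>K \<ge> 0\<close> by (simp add: h_def)
  have "K / (2 * (K + 1)) < 1" using \<open>K \<ge> 0\<close> by (simp add: field_simps)
  then have "\<epsilon> * (K / (2 * (K + 1))) < \<epsilon> * 1"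
    using \<open>\<epsilon> > 0\<close> by (rule mult_strict_left_mono)
  then have "K * h < \<epsilon>" by (simp add: h_def mult.commute)
  text \<open>Each time y is \<open>\<epsilon>\<close>-far from E it stays outside E for a time h, so W drops by c h.\<close>
  have step: "W (t + h) \<le> W t - c * h" if "0 \<le> t" "infdist (y t) E \<ge> \<epsilon>" for t
  proof -
    have "W (t + h) \<le> W t - c * (t + h - t)"
    proof (rule W_decrease)
      show "0 \<le> t" "t \<le> t + h" using that \<open>h > 0\<close> by auto
      fix s assume "s \<in> {t..t + h}"
      then have s: "t \<le> s" "s \<le> t + h" by auto
      have "dist (y t) (y s) \<le> K * h"
        using lip[of t s] s that(1) mult_left_mono[of "s - t" h K] \<open>K \<ge> 0\<close> by linarith
      then have "infdist (y s) E > 0"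
        using infdist_triangle[of "y t" E "y s"] that(2) \<open>K * h < \<epsilon>\<close> by linarith
      then show "y s \<notin> E" by auto
    qed
    then show ?thesis by simp
  qed
  show "\<forall>\<^sub>F t in at_top. dist (infdist (y t) E) 0 < \<epsilon>"
  proof (rule ccontr)
    assume not_eventually: "\<not> ?thesis"
    have far: "\<exists>t\<ge>T. infdist (y t) E \<ge> \<epsilon>" for T
    proof (rule ccontr)
      assume "\<not> ?thesis"
      then have "infdist (y t) E < \<epsilon>" if "T \<le> t" for t
        using that by (meson not_le)
      then have "\<forall>t\<ge>T. dist (infdist (y t) E) 0 < \<epsilon>"
        by (simp add: dist_real_def abs_of_nonneg[OF infdist_nonneg])
      then show False using not_eventually by (auto simp: eventually_at_top_linorder)
    qed
    have descent: "\<exists>t\<ge>0. W t \<le> W 0 - real m * (c * h)" for m :: nat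
    proof (induction m)
      case (Suc m)
      then obtain t where "t \<ge> 0" "W t \<le> W 0 - real m * (c * h)" by blast
      moreover obtain t' where "t' \<ge> t" "infdist (y t') E \<ge> \<epsilon>" using far by blast
      ultimately have "t' + h \<ge> 0" "W (t' + h) \<le> W 0 - real (Suc m) * (c * h)"
        using W_antimono[of t t'] step[of t'] \<open>h > 0\<close> by (auto simp: algebra_simps)
      then show ?case by blast
    qed auto
    obtain m :: nat where "real m > W 0 / (c * h)"
      using reals_Archimedean2 by blast
    then have "real m * (c * h) > W 0"
      using \<open>c > 0\<close> \<open>h > 0\<close> by (simp add: field_simps)
    moreover obtain t where "t \<ge> 0" "W t \<le> W 0 - real m * (c * h)"
      using descent by blast
    ultimately show False using W_nonneg[of t] by linarith
  qed
qed

lemma has_vector_derivative_vec_nth: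
  assumes "(z has_vector_derivative v) (at t)"
  shows "((\<lambda>s. z s $ j) has_real_derivative v $ j) (at t)"
  using bounded_linear.has_vector_derivative[OF bounded_linear_vec_nth assms]
  by (simp add: has_real_derivative_iff_has_vector_derivative)

lemma not_in_Eset_imp_off_switching:
  assumes "x \<notin> Eset n e d"
  obtains i where "i \<in> {1..n-1}" "coords e x i \<noteq> 0" "\<bar>coords e x i\<bar> \<noteq> d i"
proof -
  have "(\<Sum>i=1..n-1. \<bar>coords e x i\<bar> * \<bar>\<bar>coords e x i\<bar> - d i\<bar>) \<noteq> 0"
    using assms by (simp add: Eset_def)
  then obtain i where "i \<in> {1..n-1}" "\<bar>coords e x i\<bar> * \<bar>\<bar>coords e x i\<bar> - d i\<bar> \<noteq> 0"
    by (meson sum.neutral)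
  then show thesis using that by auto
qed

locale chain_krasowskii_solution =
  fixes n :: nat and e :: "nat \<Rightarrow> 'm::finite" and k d :: "nat \<Rightarrow> real"
    and z :: "real \<Rightarrow> real ^ 'm"
  assumes n3: "n \<ge> 3"
    and enum: "bij_betw e {1..n-1} UNIV"
    and dpos: "\<forall>i\<in>{1..n-1}. d i > 0"
    and k1: "k 1 \<ge> k 2"
    and kmid: "\<forall>i\<in>{2..n-2}. k i \<ge> k (i + 1) + 1"
    and klast: "k (n - 1) \<ge> 1"
    and sol: "krasowskii_solution (vfield n e k d) z"
begin

definition lyapunov :: "real ^ 'm \<Rightarrow> real" where
  "lyapunov x = (\<Sum>i=1..n-1. \<bar>\<bar>x $ e i\<bar> - d i\<bar>)"

definition speed_bound :: real where
  "speed_bound = (\<Sum>i=1..n-1. 2 + \<bar>k i\<bar> + \<bar>k (i + 1)\<bar>)"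

definition crossing_times :: "real set" where
  "crossing_times = (\<Union>i\<in>{1..n-1}. \<Union>c\<in>{0, d i, - d i}.
     {t. z t $ e i = c \<and> (\<exists>D. D \<noteq> 0 \<and> ((\<lambda>s. z s $ e i) has_real_derivative D) (at t))})"

definition regular_time :: "real \<Rightarrow> bool" where
  "regular_time t \<longleftrightarrow> 0 < t \<and> t \<notin> crossing_times \<and>
     (\<exists>v. (z has_vector_derivative v) (at t) \<and> v \<in> krasowskii (vfield n e k d) (z t))"

lemma negligible_irregular_times: "negligible {t. 0 \<le> t \<and> \<not> regular_time t}"
proof -
  have "AE t in lebesgue. 0 < t \<longrightarrow>
      (\<exists>v. (z has_vector_derivative v) (at t) \<and> v \<in> krasowskii (vfield n e k d) (z t))"
    using sol by (simp add: krasowskii_solution_def)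
  then obtain N where N: "{t \<in> space lebesgue. \<not> (0 < t \<longrightarrow> (\<exists>v. (z has_vector_derivative v) (at t)
        \<and> v \<in> krasowskii (vfield n e k d) (z t)))} \<subseteq> N" "emeasure lebesgue N = 0" "N \<in> sets lebesgue"
    by (rule AE_E)
  have "countable crossing_times"
    unfolding crossing_times_def
    by (intro countable_UN countable_finite countable_level_set_nonzero_derivative) auto
  then have "negligible (\<Union>t\<in>crossing_times. {t})"
    by (intro negligible_countable_Union) auto
  moreover have "negligible N"
    using N(2,3) by (simp add: negligible_iff_null_sets null_sets_def)
  ultimately have "negligible ({0} \<union> N \<union> crossing_times)" by simp
  moreover have "{t. 0 \<le> t \<and> \<not> regular_time t} \<subseteq> {0} \<union> N \<union> crossing_times"
    using N(1) by (auto simp: regular_time_def)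
  ultimately show ?thesis by (rule negligible_subset)
qed

lemma regular_time_weights:
  assumes "regular_time t"
  obtains v \<tau> where "(z has_vector_derivative v) (at t)"
    "\<And>i. i \<in> {1..n-1} \<Longrightarrow> \<bar>\<tau> i\<bar> \<le> 1"
    "\<And>i. i \<in> {1..n-1} \<Longrightarrow> coords e (z t) i \<noteq> 0 \<Longrightarrow> \<bar>coords e (z t) i\<bar> \<noteq> d i
       \<Longrightarrow> \<tau> i = sfun d (coords e (z t)) i"
    "\<And>i. i \<in> {1..n-1} \<Longrightarrow> v $ e i = chain_field n k \<tau> i"
proof -
  obtain v where "(z has_vector_derivative v) (at t)" "v \<in> krasowskii (vfield n e k d) (z t)"
    using assms by (auto simp: regular_time_def)
  with krasowskii_vfield_weights[OF enum] that show thesis by metis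
qed

lemma regular_time_velocity_bound:
  assumes "regular_time t"
  obtains v where "(z has_vector_derivative v) (at t)" "\<And>j. \<bar>v $ j\<bar> \<le> speed_bound"
proof -
  obtain v \<tau> where v: "(z has_vector_derivative v) (at t)"
    and \<tau>: "\<And>i. i \<in> {1..n-1} \<Longrightarrow> \<bar>\<tau> i\<bar> \<le> 1" "\<And>i. i \<in> {1..n-1} \<Longrightarrow> v $ e i = chain_field n k \<tau> i"
    using regular_time_weights[OF assms] by metis
  have "\<bar>v $ j\<bar> \<le> speed_bound" for j
  proof -
    obtain i where i: "i \<in> {1..n-1}" "j = e i" using enum unfolding bij_betw_def by blast
    have "\<bar>v $ j\<bar> \<le> 2 + \<bar>k i\<bar> + \<bar>k (i + 1)\<bar>"
      using abs_chain_field_le[OF i(1) \<tau>(1)] \<tau>(2)[OF i(1)] i(2) by simp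
    also have "\<dots> \<le> speed_bound"
      unfolding speed_bound_def using i(1) by (intro member_le_sum) auto
    finally show ?thesis .
  qed
  with v that show thesis by blast
qed

lemma regular_time_lyapunov_derivative:
  assumes "regular_time t"
  obtains w where "((\<lambda>s. lyapunov (z s)) has_real_derivative w) (at t)" "w \<le> 0"
    "z t \<notin> Eset n e d \<Longrightarrow> w \<le> - 1 / 2"
proof -
  obtain v \<tau> where v: "(z has_vector_derivative v) (at t)"
    and \<tau>_off: "\<And>i. i \<in> {1..n-1} \<Longrightarrow> coords e (z t) i \<noteq> 0 \<Longrightarrow> \<bar>coords e (z t) i\<bar> \<noteq> d i
                  \<Longrightarrow> \<tau> i = sfun d (coords e (z t)) i"
    and v_eq: "\<And>i. i \<in> {1..n-1} \<Longrightarrow> v $ e i = chain_field n k \<tau> i"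
    using regular_time_weights[OF assms] by metis
  have "t \<notin> crossing_times" using assms by (simp add: regular_time_def)
  text \<open>Off the switching levels the weight is the sign product itself; on them the
    coordinate does not move, because t is not a crossing time.\<close>
  have coordinate: "((\<lambda>s. \<bar>\<bar>z s $ e i\<bar> - d i\<bar>) has_real_derivative \<tau> i * v $ e i) (at t)"
    if i: "i \<in> {1..n-1}" for i
  proof -
    have switching: "v $ e i = 0" if "z t $ e i \<in> {0, d i, - d i}"
      using \<open>t \<notin> crossing_times\<close> that i has_vector_derivative_vec_nth[OF v, of "e i"]
      unfolding crossing_times_def by blast
    have "d i > 0" using dpos i by simp
    have "sgnp (z t $ e i) * sgnp (\<bar>z t $ e i\<bar> - d i) * v $ e i = \<tau> i * v $ e i"
    proof (cases "z t $ e i \<in> {0, d i, - d i}")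
      case False
      then have "z t $ e i \<noteq> 0" "\<bar>z t $ e i\<bar> \<noteq> d i" by (auto simp: abs_if split: if_splits)
      then show ?thesis using \<tau>_off[OF i] by (simp add: coords_def sfun_def)
    qed (simp add: switching)
    with has_real_derivative_abs_abs_minus_comp[OF has_vector_derivative_vec_nth[OF v] \<open>d i > 0\<close> switching]
    show ?thesis by simp
  qed
  define w where "w = (\<Sum>i=1..n-1. \<tau> i * chain_field n k \<tau> i)"
  have "((\<lambda>s. lyapunov (z s)) has_real_derivative w) (at t)"
    unfolding lyapunov_def w_def using coordinate v_eq by (intro DERIV_sum) simp
  moreover have w_le: "w \<le> - (1 / 2) * (\<Sum>i=1..n-1. (\<tau> i)\<^sup>2)"
    unfolding w_def by (rule sum_mult_chain_field_le[OF n3 k1 kmid klast])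
  moreover have "0 \<le> (\<Sum>i=1..n-1. (\<tau> i)\<^sup>2)" by (simp add: sum_nonneg)
  moreover have "1 \<le> (\<Sum>i=1..n-1. (\<tau> i)\<^sup>2)" if outside: "z t \<notin> Eset n e d"
  proof -
    obtain i where i: "i \<in> {1..n-1}" "coords e (z t) i \<noteq> 0" "\<bar>coords e (z t) i\<bar> \<noteq> d i"
      using not_in_Eset_imp_off_switching[OF outside] by blast
    then have "(\<tau> i)\<^sup>2 = 1" using \<tau>_off sfun_cases by (metis power2_minus one_power2)
    then show ?thesis using member_le_sum[OF i(1), of "\<lambda>i. (\<tau> i)\<^sup>2"] by simp
  qed
  ultimately show thesis
    using that[of w] by linarith
qed

lemma lipschitz_lyapunov: "lipschitz_on (real (n - 1)) UNIV lyapunov"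
proof (rule lipschitz_onI)
  fix x y :: "real ^ 'm"
  have "dist (lyapunov x) (lyapunov y) \<le> (\<Sum>i=1..n-1. \<bar>\<bar>\<bar>x $ e i\<bar> - d i\<bar> - \<bar>\<bar>y $ e i\<bar> - d i\<bar>\<bar>)"
    unfolding lyapunov_def dist_real_def sum_subtractf[symmetric] by (rule sum_abs)
  also have "\<dots> \<le> (\<Sum>i=1..n-1. dist x y)"
    by (intro sum_mono order_trans[OF abs_abs_minus_diff_le])
      (metis dist_real_def dist_vec_nth_le)
  finally show "dist (lyapunov x) (lyapunov y) \<le> real (n - 1) * dist x y" by simp
qed simp

lemma abs_cont_on_solution: "0 \<le> a \<Longrightarrow> abs_cont_on a b z"
  using sol abs_cont_on_subinterval unfolding krasowskii_solution_def
  by (metis linorder_le_cases order_refl)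

lemma dist_solution_le:
  assumes "0 \<le> a" "a \<le> b"
  shows "dist (z a) (z b) \<le> real CARD('m) * speed_bound * (b - a)"
proof -
  have coordinate: "\<bar>z b $ j - z a $ j\<bar> \<le> speed_bound * (b - a)" for j
  proof (rule abs_cont_on_DERIV_abs_le_imp_increment_le[OF \<open>a \<le> b\<close> negligible_irregular_times])
    show "abs_cont_on a b (\<lambda>t. z t $ j)"
      using abs_cont_on_lipschitz_comp[OF abs_cont_on_solution[OF \<open>0 \<le> a\<close>], of 1 "\<lambda>x. x $ j"]
      by (simp add: lipschitz_onI dist_vec_nth_le)
    fix t assume "t \<in> {a..b} - {t. 0 \<le> t \<and> \<not> regular_time t}"
    then have "regular_time t" using \<open>0 \<le> a\<close> by auto
    then obtain v where "(z has_vector_derivative v) (at t)" "\<And>j. \<bar>v $ j\<bar> \<le> speed_bound"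
      using regular_time_velocity_bound by blast
    then show "\<exists>w. ((\<lambda>t. z t $ j) has_real_derivative w) (at t) \<and> \<bar>w\<bar> \<le> speed_bound"
      using has_vector_derivative_vec_nth by blast
  qed
  have "norm (z b - z a) \<le> (\<Sum>j\<in>UNIV. \<bar>(z b - z a) $ j\<bar>)" by (rule norm_le_l1_cart)
  also have "\<dots> \<le> (\<Sum>j\<in>(UNIV :: 'm set). speed_bound * (b - a))"
    using coordinate by (intro sum_mono) simp
  finally show ?thesis by (simp add: dist_norm norm_minus_commute)
qed

lemma lyapunov_increment_le:
  assumes "0 \<le> a" "a \<le> b"
    and "\<And>t. t \<in> {a..b} \<Longrightarrow> regular_time t
           \<Longrightarrow> \<exists>w. ((\<lambda>s. lyapunov (z s)) has_real_derivative w) (at t) \<and> w \<le> \<mu>"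
  shows "lyapunov (z b) - lyapunov (z a) \<le> \<mu> * (b - a)"
proof (rule abs_cont_on_DERIV_le_imp_increment_le[OF \<open>a \<le> b\<close> negligible_irregular_times])
  show "abs_cont_on a b (\<lambda>t. lyapunov (z t))"
    by (rule abs_cont_on_lipschitz_comp[OF abs_cont_on_solution[OF \<open>0 \<le> a\<close>] lipschitz_lyapunov])
  fix t assume "t \<in> {a..b} - {t. 0 \<le> t \<and> \<not> regular_time t}"
  then show "\<exists>w. ((\<lambda>t. lyapunov (z t)) has_real_derivative w) (at t) \<and> w \<le> \<mu>"
    using assms by auto
qed

lemma lyapunov_antimono:
  assumes "0 \<le> a" "a \<le> b"
  shows "lyapunov (z b) \<le> lyapunov (z a)"
  using lyapunov_increment_le[OF assms, of 0] regular_time_lyapunov_derivative by fastforce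

lemma lyapunov_decrease:
  assumes "0 \<le> a" "a \<le> b" "\<And>s. s \<in> {a..b} \<Longrightarrow> z s \<notin> Eset n e d"
  shows "lyapunov (z b) \<le> lyapunov (z a) - 1 / 2 * (b - a)"
  using lyapunov_increment_le[OF assms(1,2), of "- 1 / 2"] regular_time_lyapunov_derivative assms(3)
  by fastforce

lemma infdist_Eset_tendsto_0: "((\<lambda>t. infdist (z t) (Eset n e d)) \<longlongrightarrow> 0) at_top"
proof (rule infdist_tendsto_0_if_lyapunov[where c = "1 / 2"])
  show "dist (z a) (z b) \<le> real CARD('m) * speed_bound * (b - a)" if "0 \<le> a" "a \<le> b" for a b
    using that by (rule dist_solution_le)
  show "0 \<le> lyapunov (z t)" for t by (simp add: lyapunov_def sum_nonneg)
  show "lyapunov (z b) \<le> lyapunov (z a)" if "0 \<le> a" "a \<le> b" for a b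
    using that by (rule lyapunov_antimono)
  show "lyapunov (z b) \<le> lyapunov (z a) - 1 / 2 * (b - a)"
    if "0 \<le> a" "a \<le> b" "\<And>s. s \<in> {a..b} \<Longrightarrow> z s \<notin> Eset n e d" for a b
    using that by (rule lyapunov_decrease)
qed simp

end

theorem theorem1:
  fixes n :: nat and e :: "nat \<Rightarrow> 'm::finite" and k d :: "nat \<Rightarrow> real"
    and z :: "real \<Rightarrow> real ^ 'm"
  assumes n3: "n \<ge> 3"
    and dim: "CARD('m) = n - 1"
    and enum: "bij_betw e {1..n-1} UNIV"
    and dpos: "\<forall>i\<in>{1..n-1}. d i > 0"
    and k1: "k 1 \<ge> k 2"
    and kmid: "\<forall>i\<in>{2..n-2}. k i \<ge> k (i + 1) + 1"
    and klast: "k (n - 1) \<ge> 1"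
    and sol: "krasowskii_solution (vfield n e k d) z"
  shows "((\<lambda>t. infdist (z t) (Eset n e d)) \<longlongrightarrow> 0) at_top"
proof -
  interpret chain_krasowskii_solution n e k d z
    using n3 enum dpos k1 kmid klast sol by unfold_locales
  show ?thesis by (rule infdist_Eset_tendsto_0)
qed

end
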